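(* Fix the following data: an integer $N_{\text{t}}\ge 2$, constants $\tilde P>0$, $H>0$, $y_{\min}>0$, $v_{\text{A,max}}>0$, $\Delta T>0$, $0<w_{\min}\le w_{\max}\le 1$, $\varepsilon_{\text{out}}\in(0,1)$, and a point $\hat{\mathbf q}_{n-1}\in\mathbb R^2$. Let $\breve{\mathbf q}_n=[\breve x_n,\breve y_n]^T\in\mathbb R^2$ and $w_n$ satisfy $\|\breve{\mathbf q}_n-\hat{\mathbf q}_{n-1}\|\le v_{\text{A,max}}\Delta T$, $\breve y_n\ge y_{\min}$, and $w_{\min}\le w_n\le w_{\max}$, and, for these fixed $\breve{\mathbf q}_n$ and $w_n$, let $\breve{\boldsymbol\Lambda}_n$ and $\hat{\boldsymbol\Lambda}_n$ be the associated $2\times 2$ positive-definite covariance matrices (which do not depend on $\boldsymbol\gamma_n$). Then the function $$\boldsymbol\gamma_n=[\breve\gamma_n,\hat\gamma_n]^T\;\longmapsto\;\tilde\varkappa(\breve{\mathbf q}_n,w_n,\boldsymbol\gamma_n)=\max\bigl(\zeta(\breve\gamma_n;\breve{\boldsymbol\Lambda}_n),\,\zeta(\hat\gamma_n;\hat{\boldsymbol\Lambda}_n)\bigr)-\varepsilon_{\text{out}},$$ defined on $\{\boldsymbol\gamma_n:\ \mathbf 0\prec\boldsymbol\gamma_n\prec\gamma_{\max}\mathbf 1_2\}$ with $\gamma_{\max}=\tilde P N_{\text{t}}/(y_{\min}^2+H^2)$, is monotonically nondecreasing in $\boldsymbol\gamma_n$ (with respect to the componentwise order).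
   Context: Notation: $\prec$ is componentwise strict inequality, $\mathbf 0$ and $\mathbf 1_2$ are the $2\times1$ zero and all-ones vectors, $\mathrm{erf}$ is the error function. Set $M=\frac{N_{\text{t}}\pi^2(N_{\text{t}}^2-1)}{24}$ and $r^2=\breve x_n^2+\breve y_n^2$. For $\gamma>0$ define $D(\gamma)=r^6\gamma+\breve x_n^2\breve y_n^2\tilde P M$, $Y_0=\frac{\breve x_n\breve y_n^3\tilde P M}{D(\gamma)}$, $Y_1=\frac{(\tilde P N_{\text{t}}-H^2\gamma)\,r^6}{D(\gamma)}$, $Y_2=-\frac{r^8\,(r^4\gamma^2+\tilde P M\breve y_n^2\gamma)}{D(\gamma)^2}$, and for $x\in\mathbb R$: $x_{\text U}=-\breve x_n+\sqrt{-Y_1/Y_2}$, $x_{\text L}=-\breve x_n-\sqrt{-Y_1/Y_2}$, $y_{\text U}(x)=-\breve y_n+Y_0(x+\breve x_n)+\sqrt{Y_1+Y_2(x+\breve x_n)^2}$, $y_{\text L}(x)=-\breve y_n+Y_0(x+\breve x_n)-\sqrt{Y_1+Y_2(x+\breve x_n)^2}$. For a positive-definite matrix $\boldsymbol\Lambda=\begin{bmatrix}\Lambda_{\text x}^2&\Lambda_{\text{xy}}^2\\ \Lambda_{\text{xy}}^2&\Lambda_{\text y}^2\end{bmatrix}$ define $\chi_{\text U}(x)=\frac{\Lambda_{\text x}^2 y_{\text U}(x)-\Lambda_{\text{xy}}^2 x}{\sqrt{2|\det\boldsymbol\Lambda|}\,\Lambda_{\text x}}$, $\chi_{\text L}(x)=\frac{\Lambda_{\text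 x}^2 y_{\text L}(x)-\Lambda_{\text{xy}}^2 x}{\sqrt{2|\det\boldsymbol\Lambda|}\,\Lambda_{\text x}}$, $\chi(x)=\frac{\mathrm{erf}(\chi_{\text U}(x))-\mathrm{erf}(\chi_{\text L}(x))}{2}$ if $x\in[x_{\text L},x_{\text U}]$ and $\chi(x)=0$ otherwise, and the approximated outage probability $\zeta(\gamma;\boldsymbol\Lambda)=1-\mathbb E_{x}[\chi(x)]$, where $x\sim\mathcal N(0,\Lambda_{\text x}^2)$. (In the paper, $\zeta(\breve\gamma_n;\breve{\boldsymbol\Lambda}_n)$ and $\zeta(\hat\gamma_n;\hat{\boldsymbol\Lambda}_n)$ are the approximated outage probabilities at the prediction and estimation stages; $\breve{\boldsymbol\Lambda}_n$ and $\hat{\boldsymbol\Lambda}_n$ are the position blocks (entries $(1,1),(1,3),(3,1),(3,3)$) of the EKF prediction and estimation MSE matrices, and in both stages the formulas above use the predicted position $(\breve x_n,\breve y_n)$.) *)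

theory Defs
  imports "HOL-Probability.Probability"
begin

text \<open>Constants of the approximated outage probability. The predicted position is
  (xb, yb); Nt is the number of antennas, P stands for tilde P.\<close>

definition M_const :: "nat \<Rightarrow> real" where
  "M_const Nt = real Nt * pi^2 * (real Nt ^ 2 - 1) / 24"

definition D_fun :: "nat \<Rightarrow> real \<Rightarrow> real \<Rightarrow> real \<Rightarrow> real \<Rightarrow> real" where
  "D_fun Nt P xb yb \<gamma> = (xb^2 + yb^2)^3 * \<gamma> + xb^2 * yb^2 * P * M_const Nt"

definition Y0 :: "nat \<Rightarrow> real \<Rightarrow> real \<Rightarrow> real \<Rightarrow> real \<Rightarrow> real" where
  "Y0 Nt P xb yb \<gamma> = xb * yb^3 * P * M_const Nt / D_fun Nt P xb yb \<gamma>"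

definition Y1 :: "nat \<Rightarrow> real \<Rightarrow> real \<Rightarrow> real \<Rightarrow> real \<Rightarrow> real \<Rightarrow> real" where
  "Y1 Nt P H xb yb \<gamma> = (P * real Nt - H^2 * \<gamma>) * (xb^2 + yb^2)^3 / D_fun Nt P xb yb \<gamma>"

definition Y2 :: "nat \<Rightarrow> real \<Rightarrow> real \<Rightarrow> real \<Rightarrow> real \<Rightarrow> real" where
  "Y2 Nt P xb yb \<gamma> = - ((xb^2 + yb^2)^4 * ((xb^2 + yb^2)^2 * \<gamma>^2 + P * M_const Nt * yb^2 * \<gamma>))
      / (D_fun Nt P xb yb \<gamma>)^2"

definition x_U :: "nat \<Rightarrow> real \<Rightarrow> real \<Rightarrow> real \<Rightarrow> real \<Rightarrow> real \<Rightarrow> real" where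
  "x_U Nt P H xb yb \<gamma> = - xb + sqrt (- Y1 Nt P H xb yb \<gamma> / Y2 Nt P xb yb \<gamma>)"

definition x_L :: "nat \<Rightarrow> real \<Rightarrow> real \<Rightarrow> real \<Rightarrow> real \<Rightarrow> real \<Rightarrow> real" where
  "x_L Nt P H xb yb \<gamma> = - xb - sqrt (- Y1 Nt P H xb yb \<gamma> / Y2 Nt P xb yb \<gamma>)"

definition y_U :: "nat \<Rightarrow> real \<Rightarrow> real \<Rightarrow> real \<Rightarrow> real \<Rightarrow> real \<Rightarrow> real \<Rightarrow> real" where
  "y_U Nt P H xb yb \<gamma> x = - yb + Y0 Nt P xb yb \<gamma> * (x + xb)
      + sqrt (Y1 Nt P H xb yb \<gamma> + Y2 Nt P xb yb \<gamma> * (x + xb)^2)"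

definition y_L :: "nat \<Rightarrow> real \<Rightarrow> real \<Rightarrow> real \<Rightarrow> real \<Rightarrow> real \<Rightarrow> real \<Rightarrow> real" where
  "y_L Nt P H xb yb \<gamma> x = - yb + Y0 Nt P xb yb \<gamma> * (x + xb)
      - sqrt (Y1 Nt P H xb yb \<gamma> + Y2 Nt P xb yb \<gamma> * (x + xb)^2)"

definition erf :: "real \<Rightarrow> real" where
  "erf z = 2 / sqrt pi * (LBINT t=0..z. exp (- (t^2)))"

text \<open>The 2x2 matrix Lambda = [[Lx2, Lxy2],[Lxy2, Ly2]] is given by its three entries
  Lx2 = Lambda_x^2, Lxy2 = Lambda_xy^2, Ly2 = Lambda_y^2; Lambda_x = sqrt Lx2.\<close>

definition pos_def2 :: "real \<Rightarrow> real \<Rightarrow> real \<Rightarrow> bool" where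
  "pos_def2 Lx2 Lxy2 Ly2 \<longleftrightarrow> Lx2 > 0 \<and> Lx2 * Ly2 - Lxy2^2 > 0"

definition chi_fun :: "nat \<Rightarrow> real \<Rightarrow> real \<Rightarrow> real \<Rightarrow> real \<Rightarrow> real \<Rightarrow> real \<Rightarrow> real \<Rightarrow> real \<Rightarrow> real \<Rightarrow> real" where
  "chi_fun Nt P H xb yb \<gamma> Lx2 Lxy2 Ly2 x =
     (if x_L Nt P H xb yb \<gamma> \<le> x \<and> x \<le> x_U Nt P H xb yb \<gamma> then
        (let s = sqrt (2 * \<bar>Lx2 * Ly2 - Lxy2^2\<bar>) * sqrt Lx2;
             cU = (Lx2 * y_U Nt P H xb yb \<gamma> x - Lxy2 * x) / s;
             cL = (Lx2 * y_L Nt P H xb yb \<gamma> x - Lxy2 * x) / s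
         in (erf cU - erf cL) / 2)
      else 0)"

definition zeta :: "nat \<Rightarrow> real \<Rightarrow> real \<Rightarrow> real \<Rightarrow> real \<Rightarrow> real \<Rightarrow> real \<Rightarrow> real \<Rightarrow> real \<Rightarrow> real" where
  "zeta Nt P H xb yb \<gamma> Lx2 Lxy2 Ly2 =
     1 - (LINT x|lborel. normal_density 0 (sqrt Lx2) x * chi_fun Nt P H xb yb \<gamma> Lx2 Lxy2 Ly2 x)"

end

theory Submission
  imports Defs
begin

(* For fixed x, chi(x) is the erf-mass of the vertical slice [y_L(x), y_U(x)] of the region
   (v - Y0 u)^2 <= Y1 + Y2 u^2, where u = x + xb and v = y + yb. Multiplying this inequality
   by D(gamma) > 0 turns it into coverage_form gamma u v <= 0, and coverage_form is increasing
   in gamma. So the regions shrink as gamma grows: the x-range and every slice shrink, chi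
   decreases pointwise, and zeta = 1 - E[chi] increases. *)

lemma exp_neg_square_eq_normal_density:
  "exp (- (t^2)) = sqrt pi * normal_density 0 (sqrt (1/2)) t" for t :: real
  by (simp add: normal_density_def real_sqrt_mult real_sqrt_divide power_divide)

lemma integrable_exp_neg_square: "integrable lborel (\<lambda>t::real. exp (- (t^2)))"
  unfolding exp_neg_square_eq_normal_density by simp

lemma interval_integrable_exp_neg_square:
  "interval_lebesgue_integrable lborel a b (\<lambda>t::real. exp (- (t^2)))"
  unfolding interval_lebesgue_integrable_def set_integrable_def
  using integrable_real_mult_indicator[OF _ integrable_exp_neg_square]
  by (auto simp: mult.commute)

lemma erf_0 [simp]: "erf 0 = 0"
  by (simp add: erf_def zero_ereal_def)

lemma erf_mono:
  assumes "a \<le> b" shows "erf a \<le> erf b"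
proof -
  have "(LBINT t=0..ereal a. exp (- (t^2))) + (LBINT t=ereal a..ereal b. exp (- (t^2)))
        = (LBINT t=0..ereal b. exp (- (t^2::real)))"
    by (rule interval_integral_sum) (rule interval_integrable_exp_neg_square)
  moreover have "0 \<le> (LBINT t=ereal a..ereal b. exp (- (t^2::real)))"
    using assms by (simp add: interval_integral_Icc set_lebesgue_integral_def)
  ultimately show ?thesis
    unfolding erf_def by (intro mult_left_mono) auto
qed

lemma erf_minus: "erf (- z) = - erf z"
proof -
  have "(LBINT t=0..ereal (- z). exp (- (t^2))) = (LBINT t=ereal z..0. exp (- (t^2::real)))"
    by (subst interval_integral_reflect) (simp add: zero_ereal_def)
  also have "\<dots> = - (LBINT t=0..ereal z. exp (- (t^2::real)))"
    by (rule interval_integral_endpoints_reverse)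
  finally show ?thesis
    unfolding erf_def by simp
qed

lemma erf_le_1: "erf z \<le> 1"
proof (cases "0 \<le> z")
  case True
  have "(LBINT t=0..ereal z. exp (- (t^2))) = (LINT t|lborel. indicator {0..z} t * exp (- (t^2::real)))"
    using True by (simp add: interval_integral_Icc set_lebesgue_integral_def zero_ereal_def)
  also have "\<dots> \<le> (LINT t|lborel. indicator {0..} t * exp (- (t^2::real)))"
  proof (rule integral_mono)
    have "integrable lborel (\<lambda>t. indicator A t * exp (- (t^2::real)))" if "A \<in> sets lborel" for A
      using integrable_real_mult_indicator[OF that integrable_exp_neg_square]
      by (simp add: mult.commute)
    then show "integrable lborel (\<lambda>t. indicator {0..z} t * exp (- (t^2::real)))"
      and "integrable lborel (\<lambda>t. indicator {0..} t * exp (- (t^2::real)))"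
      by auto
  qed (auto simp: indicator_def)
  also have "\<dots> = sqrt pi / 2"
    using gaussian_moment_0 by (simp add: has_bochner_integral_iff)
  finally show ?thesis
    unfolding erf_def by (simp add: divide_le_eq)
next
  case False
  then show ?thesis
    using erf_mono[of z 0] by simp
qed

lemma abs_erf_le_1: "\<bar>erf z\<bar> \<le> 1"
  using erf_le_1[of z] erf_le_1[of "- z"] by (simp add: erf_minus)

lemma borel_measurable_erf [measurable]: "erf \<in> borel_measurable borel"
  by (rule borel_measurable_mono) (auto simp: mono_def erf_mono)

lemma M_const_nonneg: "0 \<le> M_const Nt"
proof (cases "Nt = 0")
  case False
  then have "1 \<le> real Nt ^ 2"
    by (simp add: one_le_power)
  then show ?thesis
    unfolding M_const_def by simp
qed (simp add: M_const_def)

lemma D_fun_pos: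
  assumes "0 < g" "yb \<noteq> 0" "0 \<le> P"
  shows "0 < D_fun Nt P xb yb g"
  using assms M_const_nonneg[of Nt] unfolding D_fun_def
  by (intro add_pos_nonneg mult_pos_pos) (auto intro: add_nonneg_pos)

lemma Y2_neg:
  assumes "0 < g" "yb \<noteq> 0" "0 \<le> P"
  shows "Y2 Nt P xb yb g < 0"
proof -
  have "0 < (xb^2 + yb^2)^4 * ((xb^2 + yb^2)^2 * g^2 + P * M_const Nt * yb^2 * g)"
    using assms M_const_nonneg[of Nt]
    by (intro mult_pos_pos add_pos_nonneg mult_nonneg_nonneg) (auto intro: add_nonneg_pos)
  then show ?thesis
    unfolding Y2_def using D_fun_pos[OF assms, of Nt xb] by simp
qed

definition coverage_form :: "nat \<Rightarrow> real \<Rightarrow> real \<Rightarrow> real \<Rightarrow> real \<Rightarrow> real \<Rightarrow> real \<Rightarrow> real \<Rightarrow> real" where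
  "coverage_form Nt P H xb yb g u v =
     (xb^2 + yb^2)^3 * g * (u^2 + v^2 + H^2) + P * M_const Nt * yb^2 * (xb * v - yb * u)^2
     - P * real Nt * (xb^2 + yb^2)^3"

lemma coverage_form_mono:
  "g1 \<le> g2 \<Longrightarrow> coverage_form Nt P H xb yb g1 u v \<le> coverage_form Nt P H xb yb g2 u v"
  unfolding coverage_form_def by (intro diff_right_mono add_right_mono mult_right_mono mult_left_mono) auto

lemma ellipse_eq_coverage_form:
  assumes "0 < g" "yb \<noteq> 0" "0 \<le> P"
  shows "(v - Y0 Nt P xb yb g * u)^2 - (Y1 Nt P H xb yb g + Y2 Nt P xb yb g * u^2)
       = coverage_form Nt P H xb yb g u v / D_fun Nt P xb yb g"
proof -
  define D where "D = D_fun Nt P xb yb g"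
  define r2 where "r2 = xb^2 + yb^2"
  define m where "m = P * M_const Nt"
  define A where "A = xb * yb^3 * m"
  define B where "B = (P * real Nt - H^2 * g) * r2^3"
  define C where "C = r2^4 * (r2^2 * g^2 + m * yb^2 * g)"
  have "D \<noteq> 0"
    using D_fun_pos[OF assms, of Nt xb] by (simp add: D_def)
  have Y: "Y0 Nt P xb yb g = A / D" "Y1 Nt P H xb yb g = B / D" "Y2 Nt P xb yb g = - C / D^2"
    by (simp_all add: Y0_def Y1_def Y2_def D_def A_def B_def C_def r2_def m_def mult.assoc)
  have "(v - A / D * u)^2 - (B / D + - C / D^2 * u^2) = ((D * v - A * u)^2 - B * D + C * u^2) / D^2"
    using \<open>D \<noteq> 0\<close> by (simp add: field_simps power2_eq_square)
  also have "(D * v - A * u)^2 - B * D + C * u^2 = D * coverage_form Nt P H xb yb g u v"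
  proof -
    have "D = r2^3 * g + xb^2 * yb^2 * m"
      by (simp add: D_def D_fun_def r2_def m_def)
    moreover have "coverage_form Nt P H xb yb g u v
        = r2^3 * g * (u^2 + v^2 + H^2) + m * yb^2 * (xb * v - yb * u)^2 - P * real Nt * r2^3"
      by (simp add: coverage_form_def r2_def m_def)
    ultimately show ?thesis
      unfolding A_def B_def C_def r2_def by algebra
  qed
  finally show ?thesis
    using \<open>D \<noteq> 0\<close> by (simp add: Y D_def[symmetric] power2_eq_square)
qed

lemma ellipse_iff_coverage_form_nonpos:
  assumes "0 < g" "yb \<noteq> 0" "0 \<le> P"
  shows "(v - Y0 Nt P xb yb g * u)^2 \<le> Y1 Nt P H xb yb g + Y2 Nt P xb yb g * u^2
     \<longleftrightarrow> coverage_form Nt P H xb yb g u v \<le> 0"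
  using ellipse_eq_coverage_form[OF assms, of v Nt xb u H] D_fun_pos[OF assms, of Nt xb]
  by (smt (verit) divide_nonpos_pos divide_pos_pos)

lemma ellipse_antimono:
  assumes "0 < g1" "g1 \<le> g2" "yb \<noteq> 0" "0 \<le> P"
    and "(v - Y0 Nt P xb yb g2 * u)^2 \<le> Y1 Nt P H xb yb g2 + Y2 Nt P xb yb g2 * u^2"
  shows "(v - Y0 Nt P xb yb g1 * u)^2 \<le> Y1 Nt P H xb yb g1 + Y2 Nt P xb yb g1 * u^2"
proof -
  have "0 < g2"
    using assms by simp
  then have "coverage_form Nt P H xb yb g2 u v \<le> 0"
    using ellipse_iff_coverage_form_nonpos assms(3-5) by blast
  then have "coverage_form Nt P H xb yb g1 u v \<le> 0"
    using coverage_form_mono[OF assms(2)] order_trans by blast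
  then show ?thesis
    using ellipse_iff_coverage_form_nonpos assms(1,3,4) by blast
qed

lemma abs_le_sqrt_iff: "\<bar>a\<bar> \<le> sqrt q \<longleftrightarrow> a^2 \<le> q" for a q :: real
  by (metis power2_abs sqrt_ge_absD real_le_rsqrt)

lemma sqrt_interval_subset:
  fixes c1 c2 S1 S2 :: real
  assumes sub: "\<And>w. (w - c2)^2 \<le> S2 \<Longrightarrow> (w - c1)^2 \<le> S1" and "0 \<le> S2"
  shows "0 \<le> S1" "c1 - sqrt S1 \<le> c2 - sqrt S2" "c2 + sqrt S2 \<le> c1 + sqrt S1"
proof -
  have "(c2 - c1)^2 \<le> S1"
    using sub[of c2] \<open>0 \<le> S2\<close> by simp
  then show "0 \<le> S1"
    using zero_le_power2 order_trans by blast
  have "\<bar>c2 - sqrt S2 - c1\<bar> \<le> sqrt S1" "\<bar>c2 + sqrt S2 - c1\<bar> \<le> sqrt S1"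
    using sub[of "c2 - sqrt S2"] sub[of "c2 + sqrt S2"] \<open>0 \<le> S2\<close> by (simp_all add: abs_le_sqrt_iff)
  then show "c1 - sqrt S1 \<le> c2 - sqrt S2" "c2 + sqrt S2 \<le> c1 + sqrt S1"
    by linarith+
qed

lemma x_L_x_U_iff:
  assumes "0 < g" "yb \<noteq> 0" "0 \<le> P"
  shows "x_L Nt P H xb yb g \<le> x \<and> x \<le> x_U Nt P H xb yb g
     \<longleftrightarrow> 0 \<le> Y1 Nt P H xb yb g + Y2 Nt P xb yb g * (x + xb)^2"
proof -
  have Y2: "Y2 Nt P xb yb g < 0"
    using Y2_neg[OF assms] .
  have "x_L Nt P H xb yb g \<le> x \<and> x \<le> x_U Nt P H xb yb g
      \<longleftrightarrow> \<bar>x + xb\<bar> \<le> sqrt (- Y1 Nt P H xb yb g / Y2 Nt P xb yb g)"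
    unfolding x_L_def x_U_def by linarith
  also have "\<dots> \<longleftrightarrow> 0 \<le> Y1 Nt P H xb yb g + Y2 Nt P xb yb g * (x + xb)^2"
    using Y2 by (simp add: abs_le_sqrt_iff field_simps) linarith
  finally show ?thesis .
qed

lemma y_L_y_U_nested:
  assumes "0 < g1" "g1 \<le> g2" "yb \<noteq> 0" "0 \<le> P"
    and "x_L Nt P H xb yb g2 \<le> x \<and> x \<le> x_U Nt P H xb yb g2"
  shows "x_L Nt P H xb yb g1 \<le> x \<and> x \<le> x_U Nt P H xb yb g1"
    and "y_L Nt P H xb yb g1 x \<le> y_L Nt P H xb yb g2 x"
    and "y_U Nt P H xb yb g2 x \<le> y_U Nt P H xb yb g1 x"
proof -
  let ?u = "x + xb"
  let ?S = "\<lambda>g. Y1 Nt P H xb yb g + Y2 Nt P xb yb g * ?u^2"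
  let ?c = "\<lambda>g. Y0 Nt P xb yb g * ?u"
  have "0 < g2"
    using assms by simp
  have S2: "0 \<le> ?S g2"
    using x_L_x_U_iff[OF \<open>0 < g2\<close> assms(3,4)] assms(5) by blast
  have "\<And>w. (w - ?c g2)^2 \<le> ?S g2 \<Longrightarrow> (w - ?c g1)^2 \<le> ?S g1"
    using ellipse_antimono[OF assms(1-4)] by blast
  note nested = sqrt_interval_subset[OF this S2]
  show "x_L Nt P H xb yb g1 \<le> x \<and> x \<le> x_U Nt P H xb yb g1"
    using x_L_x_U_iff[OF assms(1,3,4)] nested(1) by blast
  show "y_L Nt P H xb yb g1 x \<le> y_L Nt P H xb yb g2 x" "y_U Nt P H xb yb g2 x \<le> y_U Nt P H xb yb g1 x"
    unfolding y_L_def y_U_def using nested(2,3) by simp_all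
qed

lemma erf_slice_mono:
  assumes "pos_def2 Lx2 Lxy2 Ly2" "y \<le> y'"
  shows "erf ((Lx2 * y - c) / (sqrt (2 * \<bar>Lx2 * Ly2 - Lxy2^2\<bar>) * sqrt Lx2))
       \<le> erf ((Lx2 * y' - c) / (sqrt (2 * \<bar>Lx2 * Ly2 - Lxy2^2\<bar>) * sqrt Lx2))"
  using assms unfolding pos_def2_def by (intro erf_mono divide_right_mono) auto

lemma chi_fun_nonneg:
  assumes "0 < g" "yb \<noteq> 0" "0 \<le> P" "pos_def2 Lx2 Lxy2 Ly2"
  shows "0 \<le> chi_fun Nt P H xb yb g Lx2 Lxy2 Ly2 x"
proof (cases "x_L Nt P H xb yb g \<le> x \<and> x \<le> x_U Nt P H xb yb g")
  case True
  then have "0 \<le> Y1 Nt P H xb yb g + Y2 Nt P xb yb g * (x + xb)^2"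
    using x_L_x_U_iff[OF assms(1-3)] by blast
  then have "y_L Nt P H xb yb g x \<le> y_U Nt P H xb yb g x"
    unfolding y_L_def y_U_def by simp
  then show ?thesis
    unfolding chi_fun_def Let_def using True erf_slice_mono[OF assms(4)] by fastforce
next
  case False
  then show ?thesis
    unfolding chi_fun_def by auto
qed

lemma abs_chi_fun_le_1: "\<bar>chi_fun Nt P H xb yb g Lx2 Lxy2 Ly2 x\<bar> \<le> 1"
  unfolding chi_fun_def Let_def using abs_erf_le_1 by (simp add: abs_le_iff) (smt (verit))

lemma chi_fun_antimono:
  assumes "0 < g1" "g1 \<le> g2" "yb \<noteq> 0" "0 \<le> P" "pos_def2 Lx2 Lxy2 Ly2"
  shows "chi_fun Nt P H xb yb g2 Lx2 Lxy2 Ly2 x \<le> chi_fun Nt P H xb yb g1 Lx2 Lxy2 Ly2 x"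
proof (cases "x_L Nt P H xb yb g2 \<le> x \<and> x \<le> x_U Nt P H xb yb g2")
  case True
  note nested = y_L_y_U_nested[OF assms(1-4) True]
  show ?thesis
    unfolding chi_fun_def Let_def
    using True nested(1) erf_slice_mono[OF assms(5) nested(2), of "Lxy2 * x"]
      erf_slice_mono[OF assms(5) nested(3), of "Lxy2 * x"]
    by simp
next
  case False
  then have "chi_fun Nt P H xb yb g2 Lx2 Lxy2 Ly2 x = 0"
    unfolding chi_fun_def by auto
  then show ?thesis
    using chi_fun_nonneg[OF assms(1,3-5)] by simp
qed

lemma borel_measurable_chi_fun [measurable]:
  "chi_fun Nt P H xb yb g Lx2 Lxy2 Ly2 \<in> borel_measurable borel"
  unfolding chi_fun_def Let_def x_L_def x_U_def y_U_def y_L_def by measurable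

lemma integrable_normal_density_chi_fun:
  assumes "0 < Lx2"
  shows "integrable lborel (\<lambda>x. normal_density 0 (sqrt Lx2) x * chi_fun Nt P H xb yb g Lx2 Lxy2 Ly2 x)"
proof (rule Bochner_Integration.integrable_bound)
  show "integrable lborel (normal_density 0 (sqrt Lx2))"
    using assms by simp
  show "AE x in lborel. norm (normal_density 0 (sqrt Lx2) x * chi_fun Nt P H xb yb g Lx2 Lxy2 Ly2 x)
      \<le> norm (normal_density 0 (sqrt Lx2) x)"
    using abs_chi_fun_le_1 normal_density_nonneg
    by (intro AE_I2) (simp add: abs_mult mult_left_le)
qed simp

lemma zeta_mono:
  assumes "0 < g1" "g1 \<le> g2" "yb \<noteq> 0" "0 \<le> P" "pos_def2 Lx2 Lxy2 Ly2"
  shows "zeta Nt P H xb yb g1 Lx2 Lxy2 Ly2 \<le> zeta Nt P H xb yb g2 Lx2 Lxy2 Ly2"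
proof -
  have "0 < Lx2"
    using assms(5) by (simp add: pos_def2_def)
  then have "(LINT x|lborel. normal_density 0 (sqrt Lx2) x * chi_fun Nt P H xb yb g2 Lx2 Lxy2 Ly2 x)
      \<le> (LINT x|lborel. normal_density 0 (sqrt Lx2) x * chi_fun Nt P H xb yb g1 Lx2 Lxy2 Ly2 x)"
    by (intro integral_mono integrable_normal_density_chi_fun mult_left_mono chi_fun_antimono[OF assms])
      simp_all
  then show ?thesis
    unfolding zeta_def by simp
qed

theorem proposition2:
  fixes Nt :: nat
    and P H ymin vAmax dT wmin wmax eps_out :: real
    and xh yh xb yb wn :: real
    and Bx2 Bxy2 By2 Hx2 Hxy2 Hy2 :: real
  assumes "Nt \<ge> 2" and "P > 0" and "H > 0" and "ymin > 0" and "vAmax > 0" and "dT > 0"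
    and "0 < wmin" and "wmin \<le> wmax" and "wmax \<le> 1"
    and "0 < eps_out" and "eps_out < 1"
    and "sqrt ((xb - xh)^2 + (yb - yh)^2) \<le> vAmax * dT"
    and "yb \<ge> ymin"
    and "wmin \<le> wn" and "wn \<le> wmax"
    and "pos_def2 Bx2 Bxy2 By2"
    and "pos_def2 Hx2 Hxy2 Hy2"
  shows "\<forall>g1 h1 g2 h2.
     let gmax = P * real Nt / (ymin^2 + H^2);
         kappa = (\<lambda>g h. max (zeta Nt P H xb yb g Bx2 Bxy2 By2) (zeta Nt P H xb yb h Hx2 Hxy2 Hy2) - eps_out)
     in (0 < g1 \<and> g1 < gmax \<and> 0 < h1 \<and> h1 < gmax \<and> 0 < g2 \<and> g2 < gmax \<and> 0 < h2 \<and> h2 < gmax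
         \<and> g1 \<le> g2 \<and> h1 \<le> h2) \<longrightarrow> kappa g1 h1 \<le> kappa g2 h2"
proof -
  have "yb \<noteq> 0" "0 \<le> P"
    using assms(2,4,13) by auto
  then show ?thesis
    unfolding Let_def
    using zeta_mono[OF _ _ _ _ assms(16)] zeta_mono[OF _ _ _ _ assms(17)]
    by (intro allI impI diff_right_mono max.mono) auto
qed

end
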